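(* Consider the proportional mechanism with $n=2$ agents and total budget $B$ equal to the cost constant $C$ (where $C>0$). For every $\epsilon>0$ there exists a type profile $(q_1,q_2)$ with $0<q_1\le q_2$ such that for every pure Nash equilibrium $(x_1^{\mathrm{prop}},x_2^{\mathrm{prop}})$ of the proportional mechanism and every optimal solution $(f,x_1^*,x_2^* )$ of the reward-design problem (both defined in the context, with these $q_1,q_2$, $B=C$), we have \[\frac{x_1^{\mathrm{prop}}+x_2^{\mathrm{prop}}}{x_1^*+x_2^*}\le \epsilon.\]
   Context: There are $n$ agents; agent $i$ has type $q_i>0$ (the best quality it can produce), with $0<q_1\le\cdots\le q_n$. Agent $i$ chooses a quality $x_i\in[0,q_i]$ and incurs cost $x_iC/q_i$, where $C>0$ is a constant. $B>0$ is the budget. Proportional mechanism: agent $i$'s utility is $u_i(x_i,x_{-i})=\dfrac{x_iB}{\sum_{j=1}^n x_j}-\dfrac{x_iC}{q_i}$, with the convention that $u_i=0$ when all $x_j=0$. A pure Nash equilibrium is a profile $(x_1,\dots,x_n)$ with $x_i\in[0,q_i]$ such that no agent can increase its utility by unilaterally changing $x_i$ within $[0,q_i]$. Reward-design problem: a reward function is a map $f:[0,\infty)\to[0,\infty)$; agent $i$'s utility is $u_i(x)=f(x)-xC/q_i$. A pair $(f,x_1^*,\dots,x_n^* )$ is feasible if for each $i$: $0\le x_i^*\le q_i$ and $u_i(x_i^* )\ge u_i(x)$ for all $x\in[0,q_i]$ (incentive constraint), and $\sum_{i=1}^n f(x_i^* )\le B$ (budget constraint). The problem is to maximize $\sum_{i=1}^n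 x_i^*$ over feasible $(f,x^* )$; an optimal solution is a feasible pair attaining the maximum. *)

theory Defs
  imports Complex_Main
begin

definition prop_utility ::
  "nat \<Rightarrow> (nat \<Rightarrow> real) \<Rightarrow> real \<Rightarrow> real \<Rightarrow> nat \<Rightarrow> (nat \<Rightarrow> real) \<Rightarrow> real" where
  "prop_utility n q B C i x =
     (if (\<forall>j\<in>{1..n}. x j = 0) then 0
      else x i * B / (\<Sum>j=1..n. x j) - x i * C / q i)"

definition prop_pure_NE ::
  "nat \<Rightarrow> (nat \<Rightarrow> real) \<Rightarrow> real \<Rightarrow> real \<Rightarrow> (nat \<Rightarrow> real) \<Rightarrow> bool" where
  "prop_pure_NE n q B C x \<longleftrightarrow>
     (\<forall>i\<in>{1..n}. 0 \<le> x i \<and> x i \<le> q i) \<and>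
     (\<forall>i\<in>{1..n}. \<forall>y. 0 \<le> y \<and> y \<le> q i \<longrightarrow>
        prop_utility n q B C i (x(i := y)) \<le> prop_utility n q B C i x)"

definition rd_feasible ::
  "nat \<Rightarrow> (nat \<Rightarrow> real) \<Rightarrow> real \<Rightarrow> real \<Rightarrow> (real \<Rightarrow> real) \<Rightarrow> (nat \<Rightarrow> real) \<Rightarrow> bool" where
  "rd_feasible n q B C f x \<longleftrightarrow>
     (\<forall>t\<ge>0. f t \<ge> 0) \<and>
     (\<forall>i\<in>{1..n}. 0 \<le> x i \<and> x i \<le> q i \<and>
        (\<forall>t. 0 \<le> t \<and> t \<le> q i \<longrightarrow> f t - t * C / q i \<le> f (x i) - x i * C / q i)) \<and>
     (\<Sum>i=1..n. f (x i)) \<le> B"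

definition rd_optimal ::
  "nat \<Rightarrow> (nat \<Rightarrow> real) \<Rightarrow> real \<Rightarrow> real \<Rightarrow> (real \<Rightarrow> real) \<Rightarrow> (nat \<Rightarrow> real) \<Rightarrow> bool" where
  "rd_optimal n q B C f x \<longleftrightarrow>
     rd_feasible n q B C f x \<and>
     (\<forall>g y. rd_feasible n q B C g y \<longrightarrow> (\<Sum>i=1..n. y i) \<le> (\<Sum>i=1..n. x i))"

end

theory Submission
  imports Defs
begin

text \<open>At an equilibrium of the proportional mechanism an active agent \<open>i\<close> must not gain by
dropping to quality 0, i.e. \<open>B / S \<ge> C / q\<^sub>i\<close> for the total quality \<open>S\<close>; hence
\<open>S \<le> q\<^sub>i B / C\<close>. An agent that is the only active one would gain by halving its quality, so with
two agents either agent 1 is active or nobody is, and for \<open>B = C\<close> the total is at most \<open>q\<^sub>1\<close>.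
On the other hand the linear reward \<open>t C / q\<^sub>2\<close> makes the strongest agent indifferent, so it can
produce \<open>q\<^sub>2\<close> within budget \<open>C\<close>, while weaker agents prefer 0; so the optimum is at least \<open>q\<^sub>2\<close>.
Choosing \<open>q\<^sub>1 = min \<epsilon> 1\<close> and \<open>q\<^sub>2 = 1\<close> makes the ratio at most \<open>\<epsilon>\<close>.\<close>

lemma sum_atLeastAtMost_1_2: "(\<Sum>j=1..2::nat. (x::nat \<Rightarrow> real) j) = x 1 + x 2"
  by (simp add: numeral_2_eq_2)

lemma ball_atLeastAtMost_1_2: "(\<forall>j\<in>{1..2::nat}. P j) \<longleftrightarrow> P 1 \<and> P 2"
  by (auto simp: numeral_2_eq_2 le_Suc_eq)

lemma prop_pure_NE_total_le:
  assumes NE: "prop_pure_NE n q B C x" and i: "i \<in> {1..n}"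
    and active: "x i > 0" and "q i > 0" and "C > 0"
  shows "(\<Sum>j=1..n. x j) \<le> q i * B / C"
proof -
  let ?S = "\<Sum>j=1..n. x j"
  have nonneg: "\<forall>j\<in>{1..n}. 0 \<le> x j"
    using NE unfolding prop_pure_NE_def by auto
  have "x i \<le> ?S"
    using nonneg i by (intro member_le_sum) auto
  with active have S_pos: "?S > 0" by linarith
  have "prop_utility n q B C i (x(i := 0)) \<le> prop_utility n q B C i x"
    using NE i \<open>q i > 0\<close> unfolding prop_pure_NE_def by auto
  moreover have "prop_utility n q B C i (x(i := 0)) = 0"
    unfolding prop_utility_def by simp
  ultimately have "x i * C / q i \<le> x i * B / ?S"
    using i active unfolding prop_utility_def by (auto split: if_splits)
  then have "x i * (C / q i) \<le> x i * (B / ?S)" by simp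
  then have "C / q i \<le> B / ?S"
    using active by (simp only: mult_le_cancel_left_pos)
  then show ?thesis
    using S_pos \<open>q i > 0\<close> \<open>C > 0\<close> by (simp add: field_simps)
qed

lemma prop_pure_NE_no_monopoly:
  assumes NE: "prop_pure_NE n q B C x" and i: "i \<in> {1..n}"
    and active: "x i > 0" and others: "\<forall>j\<in>{1..n}. j \<noteq> i \<longrightarrow> x j = 0"
    and "q i > 0" and "C > 0"
  shows False
proof -
  have monopoly_utility: "prop_utility n q B C i (x(i := y)) = B - y * C / q i" if "y > 0" for y
  proof -
    have "(\<Sum>j=1..n. (x(i := y)) j) = (\<Sum>j=1..n. if j = i then y else 0)"
      using others by (intro sum.cong) auto
    also have "\<dots> = y" using i by simp
    finally show ?thesis
      using i \<open>y > 0\<close> unfolding prop_utility_def by auto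
  qed
  have "x i \<le> q i" using NE i unfolding prop_pure_NE_def by blast
  then have "0 \<le> x i / 2" "x i / 2 \<le> q i" using active by simp_all
  then have "prop_utility n q B C i (x(i := x i / 2)) \<le> prop_utility n q B C i (x(i := x i))"
    using NE i unfolding prop_pure_NE_def by simp
  then have "x i * C / q i \<le> x i / 2 * C / q i"
    using monopoly_utility[of "x i"] monopoly_utility[of "x i / 2"] active by simp
  then show False
    using active \<open>q i > 0\<close> \<open>C > 0\<close> by (simp add: field_simps)
qed

lemma prop_pure_NE_two_agents_total_le:
  assumes NE: "prop_pure_NE 2 q B C x"
    and "0 < q 1" "q 1 \<le> q 2" "C > 0" "B \<ge> 0"
  shows "x 1 + x 2 \<le> q 1 * B / C"
proof -
  have nonneg: "0 \<le> x 1" "0 \<le> x 2"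
    using NE unfolding prop_pure_NE_def ball_atLeastAtMost_1_2 by auto
  consider "x 1 > 0" | "x 1 = 0" "x 2 > 0" | "x 1 = 0" "x 2 = 0"
    using nonneg by linarith
  then show ?thesis
  proof cases
    case 1
    have "(\<Sum>j=1..2. x j) \<le> q 1 * B / C"
      by (rule prop_pure_NE_total_le[OF NE]) (use 1 assms in auto)
    then show ?thesis by (simp only: sum_atLeastAtMost_1_2)
  next
    case 2
    then have "\<forall>j\<in>{1..2}. j \<noteq> 2 \<longrightarrow> x j = 0"
      unfolding ball_atLeastAtMost_1_2 by simp
    with 2 show ?thesis
      using prop_pure_NE_no_monopoly[OF NE, of 2] assms by simp
  next
    case 3
    then show ?thesis using assms by simp
  qed
qed

lemma rd_feasible_linear_reward_strongest:
  assumes k: "k \<in> {1..n}" and strongest: "\<forall>i\<in>{1..n}. 0 < q i \<and> q i \<le> q k"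
    and "C > 0" and "C \<le> B"
  shows "rd_feasible n q B C (\<lambda>t. t * C / q k) (\<lambda>i. if i = k then q k else 0)"
proof -
  have qk: "q k > 0" using k strongest by blast
  have weaker_prefer_zero: "t * C / q k - t * C / q i \<le> 0"
    if "i \<in> {1..n}" "0 \<le> t" for i t
  proof -
    have "0 < q i" "q i \<le> q k" using that strongest by auto
    then have "t * C / q k \<le> t * C / q i"
      using that \<open>C > 0\<close> by (intro divide_left_mono) auto
    then show ?thesis by simp
  qed
  have "(\<Sum>i=1..n. (if i = k then q k else 0) * C / q k) = (\<Sum>i=1..n. if i = k then C else 0)"
    using qk by (intro sum.cong) auto
  also have "\<dots> = C" using k by simp
  finally have budget: "(\<Sum>i=1..n. (if i = k then q k else 0) * C / q k) = C" .
  show ?thesis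
    unfolding rd_feasible_def
    using budget qk \<open>C > 0\<close> \<open>C \<le> B\<close> strongest weaker_prefer_zero by auto
qed

lemma rd_optimal_total_ge_strongest:
  assumes "rd_optimal n q B C f x"
    and "k \<in> {1..n}" and "\<forall>i\<in>{1..n}. 0 < q i \<and> q i \<le> q k"
    and "C > 0" and "C \<le> B"
  shows "q k \<le> (\<Sum>i=1..n. x i)"
proof -
  have "(\<Sum>i=1..n. if i = k then q k else 0) \<le> (\<Sum>i=1..n. x i)"
    using assms rd_feasible_linear_reward_strongest unfolding rd_optimal_def by blast
  then show ?thesis using \<open>k \<in> {1..n}\<close> by simp
qed

theorem theorem1:
  fixes C \<epsilon> :: real
  assumes "C > 0" and "\<epsilon> > 0"
  shows "\<exists>q :: nat \<Rightarrow> real. 0 < q 1 \<and> q 1 \<le> q 2 \<and>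
           (\<forall>xp. prop_pure_NE 2 q C C xp \<longrightarrow>
              (\<forall>f xs. rd_optimal 2 q C C f xs \<longrightarrow>
                 (xp 1 + xp 2) / (xs 1 + xs 2) \<le> \<epsilon>))"
proof -
  define q :: "nat \<Rightarrow> real" where "q = (\<lambda>i. if i = 1 then min \<epsilon> 1 else 1)"
  have q: "0 < q 1" "q 1 \<le> \<epsilon>" "q 1 \<le> q 2" "q 2 = 1"
    using \<open>\<epsilon> > 0\<close> by (auto simp: q_def)
  have types: "\<forall>i\<in>{1..2}. 0 < q i \<and> q i \<le> q 2"
    using q unfolding ball_atLeastAtMost_1_2 by simp
  show ?thesis
  proof (intro exI[of _ q] conjI allI impI)
    fix xp f xs
    assume NE: "prop_pure_NE 2 q C C xp" and opt: "rd_optimal 2 q C C f xs"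
    have "0 \<le> xp 1 + xp 2"
      using NE unfolding prop_pure_NE_def ball_atLeastAtMost_1_2 by simp
    have "1 \<le> (\<Sum>i=1..2. xs i)"
      using rd_optimal_total_ge_strongest[OF opt _ types] q \<open>C > 0\<close> by simp
    then have "(xp 1 + xp 2) / (xs 1 + xs 2) \<le> (xp 1 + xp 2) / 1"
      using \<open>0 \<le> xp 1 + xp 2\<close> unfolding sum_atLeastAtMost_1_2
      by (intro divide_left_mono) auto
    also have "\<dots> \<le> \<epsilon>"
      using prop_pure_NE_two_agents_total_le[OF NE] q \<open>C > 0\<close> by simp
    finally show "(xp 1 + xp 2) / (xs 1 + xs 2) \<le> \<epsilon>" .
  qed (use q in auto)
qed

end
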